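(* Let $g \ge h \ge 2$ be integers. There is a constant $C>0$ depending only on $g$ and $h$ such that for every positive integer $n$ and every $C_h[g]$ set $A \subset \{1,2,\dots,n\}$, $$|A| \le (g-1)^{1/h}\, n^{1-\frac{1}{h}} + C\, n^{\frac{1}{2}-\frac{1}{2h}}.$$
   Context: A set of integers $A$ is called a $C_h[g]$ set if for every set $X$ of $h$ integers there do not exist $g$ distinct integers $k_1,\dots,k_g$ such that $X+k_i \subset A$ for all $i=1,\dots,g$ (here $X+k=\{x+k : x\in X\}$). In words, $A$ contains no $g$ distinct translates of a common $h$-element set. *)

theory Defs
  imports Complex_Main
begin

definition Ch_g_set :: "nat \<Rightarrow> nat \<Rightarrow> int set \<Rightarrow> bool" where
  "Ch_g_set h g A \<longleftrightarrow>
     (\<forall>X :: int set. finite X \<and> card X = h \<longrightarrow>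
        \<not> (\<exists>K :: int set. finite K \<and> card K = g \<and> (\<forall>k\<in>K. (\<lambda>x. x + k) ` X \<subseteq> A)))"

end

theory Submission
  imports Defs
begin

text \<open>Slide a window of length m over the shifts t of A and let b_t = |(A - t) \<inter> [1, m]| be the
number of elements of A in t + [1, m]. An h-subset X of [1, m] is contained in the window at shift t
iff X + t \<subseteq> A, so by the C_h[g] property X lies in at most g - 1 windows, whence
\<Sum>_t C(b_t, h) \<le> (g - 1) C(m, h); on the other hand \<Sum>_t b_t = m |A|. Since
C(b, h) \<ge> (b - h + 1)^h / h!, the power mean inequality over the n + m - 1 shifts gives
m |A| - (n + m - 1)(h - 1) \<le> (g - 1)^(1/h) m (n + m - 1)^(1 - 1/h).
Taking m \<approx> n^(1/2 + 1/(2h)) balances the two error terms.\<close>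

definition window :: "int set \<Rightarrow> nat \<Rightarrow> int \<Rightarrow> int set" where
  "window A m t = {x \<in> {1..int m}. x + t \<in> A}"

lemma window_subset: "window A m t \<subseteq> {1..int m}"
  unfolding window_def by auto

lemma finite_window [simp]: "finite (window A m t)"
  by (rule finite_subset[OF window_subset]) simp

lemma Ch_g_set_sum_window_choose_le:
  assumes A: "A \<subseteq> {1..int n}" and C: "Ch_g_set h g A" and g: "g \<ge> 1"
  shows "(\<Sum>t\<in>{1 - int m..int n - 1}. card (window A m t) choose h) \<le> (g - 1) * (m choose h)"
proof -
  define T where "T = {1 - int m..int n - 1}"
  define S where "S = {X. X \<subseteq> {1..int m} \<and> card X = h}"
  have finS: "finite S" unfolding S_def by (rule finite_subset[of _ "Pow {1..int m}"]) auto
  have cardS: "card S = m choose h" unfolding S_def using n_subsets[of "{1..int m}" h] by simp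
  have choose_eq: "card (window A m t) choose h = (\<Sum>X\<in>S. if X \<subseteq> window A m t then 1 else 0)" for t
  proof -
    have "card (window A m t) choose h = card {X. X \<subseteq> window A m t \<and> card X = h}"
      by (simp add: n_subsets)
    also have "{X. X \<subseteq> window A m t \<and> card X = h} = {X\<in>S. X \<subseteq> window A m t}"
      unfolding S_def using window_subset by blast
    also have "card \<dots> = (\<Sum>X\<in>S. if X \<subseteq> window A m t then 1 else 0)"
      using sum.inter_filter[OF finS, of "\<lambda>_. (1::nat)"] by simp
    finally show ?thesis .
  qed
  have few_windows: "(\<Sum>t\<in>T. if X \<subseteq> window A m t then 1 else 0) \<le> g - 1" if "X \<in> S" for X
  proof -
    have "(\<Sum>t\<in>T. if X \<subseteq> window A m t then 1 else (0::nat)) = card {t\<in>T. X \<subseteq> window A m t}"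
      using sum.inter_filter[of T "\<lambda>_. (1::nat)"] by (simp add: T_def)
    also have "\<dots> \<le> g - 1"
    proof (rule ccontr)
      assume "\<not> ?thesis"
      then have "g \<le> card {t\<in>T. X \<subseteq> window A m t}" using g by simp
      then obtain K where K: "K \<subseteq> {t\<in>T. X \<subseteq> window A m t}" "card K = g" "finite K"
        by (rule obtain_subset_with_card_n)
      have X: "finite X" "card X = h" using that unfolding S_def by (auto intro: finite_subset)
      have "\<forall>k\<in>K. (\<lambda>x. x + k) ` X \<subseteq> A" using K(1) unfolding window_def by auto
      then show False using C X K unfolding Ch_g_set_def by blast
    qed
    finally show ?thesis .
  qed
  have "(\<Sum>t\<in>T. card (window A m t) choose h)
      = (\<Sum>X\<in>S. \<Sum>t\<in>T. if X \<subseteq> window A m t then 1 else 0)"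
    by (simp add: choose_eq sum.swap[of _ T])
  also have "\<dots> \<le> (\<Sum>X\<in>S. g - 1)" by (rule sum_mono) (use few_windows in auto)
  also have "\<dots> = (g - 1) * (m choose h)" using cardS by simp
  finally show ?thesis unfolding T_def .
qed

lemma sum_card_window:
  assumes A: "A \<subseteq> {1..int n}"
  shows "(\<Sum>t\<in>{1 - int m..int n - 1}. card (window A m t)) = m * card A"
proof -
  define T where "T = {1 - int m..int n - 1}"
  have "(\<Sum>t\<in>T. card (window A m t)) = (\<Sum>t\<in>T. \<Sum>x\<in>{1..int m}. if x + t \<in> A then 1 else 0)"
    by (rule sum.cong) (auto simp: window_def sum.inter_filter[symmetric])
  also have "\<dots> = (\<Sum>x\<in>{1..int m}. \<Sum>t\<in>T. if x + t \<in> A then 1 else 0)" by (rule sum.swap)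
  also have "\<dots> = (\<Sum>x\<in>{1..int m}. card A)"
  proof (rule sum.cong[OF refl])
    fix x assume x: "x \<in> {1..int m}"
    have "(\<Sum>t\<in>T. if x + t \<in> A then 1 else (0::nat)) = card {t\<in>T. x + t \<in> A}"
      using sum.inter_filter[of T "\<lambda>_. (1::nat)"] by (simp add: T_def)
    also have "{t\<in>T. x + t \<in> A} = (\<lambda>a. a - x) ` A"
    proof
      show "{t\<in>T. x + t \<in> A} \<subseteq> (\<lambda>a. a - x) ` A"
        by (auto simp: image_iff intro!: bexI[where x="x + _"])
      show "(\<lambda>a. a - x) ` A \<subseteq> {t\<in>T. x + t \<in> A}" using A x by (auto simp: T_def)
    qed
    also have "card \<dots> = card A" by (rule card_image) (auto simp: inj_on_def)
    finally show "(\<Sum>t\<in>T. if x + t \<in> A then 1 else 0) = card A" .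
  qed
  finally show ?thesis unfolding T_def by simp
qed

lemma power_le_fact_mult_binomial:
  "(max 0 (real b - (real h - 1))) ^ h \<le> fact h * real (b choose h)"
proof (cases "h \<le> b + 1")
  case True
  have "(\<Prod>i = 0..<h. max 0 (real b - (real h - 1))) \<le> (\<Prod>i = 0..<h. real b - of_nat i)"
    by (rule prod_mono) (use True in auto)
  also have "\<dots> = fact h * real (b choose h)"
    using gbinomial_mult_fact[of h "real b"] by (simp add: binomial_gbinomial)
  finally show ?thesis by simp
next
  case False
  then show ?thesis by (simp add: zero_power)
qed

lemma fact_mult_binomial_le_power: "fact h * real (m choose h) \<le> real m ^ h"
proof (cases "h \<le> m")
  case True
  have "fact h * real (m choose h) = (\<Prod>i = 0..<h. real m - of_nat i)"
    using gbinomial_mult_fact[of h "real m"] by (simp add: binomial_gbinomial)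
  also have "\<dots> \<le> (\<Prod>i = 0..<h. real m)"
    by (rule prod_mono) (use True in auto)
  finally show ?thesis by simp
qed (simp add: binomial_eq_0)

lemma power_ge_tangent_line:
  fixes y \<mu> :: real
  assumes "y \<ge> 0" "\<mu> > 0" "h \<ge> 1"
  shows "\<mu> ^ h + real h * \<mu> ^ (h - 1) * (y - \<mu>) \<le> y ^ h"
proof -
  have "1 + real h * ((y - \<mu>) / \<mu>) \<le> (1 + (y - \<mu>) / \<mu>) ^ h"
    by (rule Bernoulli_inequality) (use assms in \<open>simp add: field_simps\<close>)
  also have "1 + (y - \<mu>) / \<mu> = y / \<mu>" using assms by (simp add: field_simps)
  finally have "\<mu> ^ h * (1 + real h * ((y - \<mu>) / \<mu>)) \<le> \<mu> ^ h * (y / \<mu>) ^ h"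
    using assms by (intro mult_left_mono) auto
  also have "\<mu> ^ h * (y / \<mu>) ^ h = y ^ h" using assms by (simp add: power_divide)
  also have "\<mu> ^ h * (1 + real h * ((y - \<mu>) / \<mu>)) = \<mu> ^ h + real h * \<mu> ^ (h - 1) * (y - \<mu>)"
    using assms by (cases h) (simp_all add: field_simps)
  finally show ?thesis .
qed

lemma power_of_mean_le_mean_of_powers:
  fixes y :: "'a \<Rightarrow> real"
  assumes h: "h \<ge> 1" and fin: "finite T" and ne: "T \<noteq> {}" and pos: "\<And>t. t \<in> T \<Longrightarrow> y t \<ge> 0"
  shows "real (card T) * ((\<Sum>t\<in>T. y t) / real (card T)) ^ h \<le> (\<Sum>t\<in>T. y t ^ h)"
proof -
  define N where "N = real (card T)"
  have N: "N > 0" using fin ne by (simp add: N_def card_gt_0_iff)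
  define \<mu> where "\<mu> = (\<Sum>t\<in>T. y t) / N"
  have "\<mu> \<ge> 0" unfolding \<mu>_def using pos N by (auto intro: sum_nonneg divide_nonneg_pos)
  show ?thesis
  proof (cases "\<mu> = 0")
    case True
    then show ?thesis
      using pos by (cases h) (auto simp: \<mu>_def N_def[symmetric] intro!: sum_nonneg)
  next
    case False
    with \<open>\<mu> \<ge> 0\<close> have mu: "\<mu> > 0" by simp
    have "(\<Sum>t\<in>T. \<mu> ^ h + real h * \<mu> ^ (h - 1) * (y t - \<mu>)) \<le> (\<Sum>t\<in>T. y t ^ h)"
      by (rule sum_mono) (use power_ge_tangent_line[OF _ mu h] pos in auto)
    also have "(\<Sum>t\<in>T. \<mu> ^ h + real h * \<mu> ^ (h - 1) * (y t - \<mu>))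
        = N * \<mu> ^ h + real h * \<mu> ^ (h - 1) * ((\<Sum>t\<in>T. y t) - N * \<mu>)"
      by (simp add: sum.distrib sum_distrib_left[symmetric] sum_subtractf N_def)
    also have "(\<Sum>t\<in>T. y t) - N * \<mu> = 0" using N by (simp add: \<mu>_def)
    finally show ?thesis by (simp add: N_def \<mu>_def)
  qed
qed

lemma le_root_of_mean_power_le:
  fixes R N G M :: real and h :: nat
  assumes h: "h \<ge> 1" and N: "N > 0" and M: "M \<ge> 0" and G: "G > 0"
    and ineq: "N * (R / N) ^ h \<le> G * M ^ h"
  shows "R \<le> G powr (1 / real h) * M * N powr (1 - 1 / real h)"
proof (rule ccontr)
  define r where "r = G powr (1 / real h) * M * N powr (- 1 / real h)"
  have "N powr (1 + - 1 / real h) = N powr 1 * N powr (- 1 / real h)" by (rule powr_add)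
  then have "G powr (1 / real h) * M * N powr (1 - 1 / real h) = r * N"
    using N by (simp add: r_def)
  moreover assume "\<not> ?thesis"
  ultimately have "r < R / N" using N by (simp add: pos_less_divide_eq)
  moreover have "r \<ge> 0" using M by (simp add: r_def)
  ultimately have "r ^ h < (R / N) ^ h" using h by (intro power_strict_mono) auto
  also have "r ^ h = G * M ^ h / N"
    using G N h by (simp add: r_def power_mult_distrib powr_power powr_neg_one)
  finally have "G * M ^ h < N * (R / N) ^ h" using N by (simp add: field_simps)
  with ineq show False by simp
qed

lemma Ch_g_set_sum_window_excess_power_le:
  assumes A: "A \<subseteq> {1..int n}" and C: "Ch_g_set h g A" and g: "g \<ge> 1"
  shows "(\<Sum>t\<in>{1 - int m..int n - 1}. (max 0 (real (card (window A m t)) - (real h - 1))) ^ h)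
           \<le> (real g - 1) * real m ^ h"
proof -
  define T where "T = {1 - int m..int n - 1}"
  have "(\<Sum>t\<in>T. (max 0 (real (card (window A m t)) - (real h - 1))) ^ h)
      \<le> (\<Sum>t\<in>T. fact h * real (card (window A m t) choose h))"
    by (rule sum_mono) (rule power_le_fact_mult_binomial)
  also have "\<dots> = fact h * real (\<Sum>t\<in>T. card (window A m t) choose h)"
    by (simp add: sum_distrib_left)
  also have "\<dots> \<le> fact h * real ((g - 1) * (m choose h))"
    using Ch_g_set_sum_window_choose_le[OF A C g, of m] unfolding T_def
    by (intro mult_left_mono of_nat_mono) simp_all
  also have "\<dots> = (real g - 1) * (fact h * real (m choose h))" using g by (simp add: of_nat_diff)
  also have "\<dots> \<le> (real g - 1) * real m ^ h"
    using g by (intro mult_left_mono fact_mult_binomial_le_power) auto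
  finally show ?thesis unfolding T_def .
qed

lemma Ch_g_set_card_le_window:
  assumes h: "h \<ge> 1" and g: "g \<ge> 2" and n: "n \<ge> 1" and m: "m \<ge> 1"
    and A: "A \<subseteq> {1..int n}" and C: "Ch_g_set h g A"
  shows "real (card A) \<le> (real g - 1) powr (1 / real h) * real (n + m - 1) powr (1 - 1 / real h)
           + real (n + m - 1) * (real h - 1) / real m"
proof -
  define T where "T = {1 - int m..int n - 1}"
  define y where "y t = max 0 (real (card (window A m t)) - (real h - 1))" for t
  define N where "N = real (n + m - 1)"
  define R where "R = real m * real (card A) - N * (real h - 1)"
  have cT: "card T = n + m - 1" unfolding T_def using n m by simp
  have T: "finite T" "T \<noteq> {}" using n m by (auto simp: T_def)
  have N: "N > 0" using n m by (simp add: N_def)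
  have "R = (\<Sum>t\<in>T. real (card (window A m t)) - (real h - 1))"
    using sum_card_window[OF A, of m] cT
    by (simp add: sum_subtractf T_def R_def N_def flip: of_nat_sum)
  also have "\<dots> \<le> (\<Sum>t\<in>T. y t)"
    by (rule sum_mono) (simp add: y_def)
  finally have R_le: "R \<le> (\<Sum>t\<in>T. y t)" .
  have "R \<le> (real g - 1) powr (1 / real h) * real m * N powr (1 - 1 / real h)"
  proof (cases "R \<le> 0")
    case False
    have "N * (R / N) ^ h \<le> N * ((\<Sum>t\<in>T. y t) / N) ^ h"
      using R_le False N by (intro mult_left_mono power_mono divide_right_mono) auto
    also have "\<dots> \<le> (\<Sum>t\<in>T. y t ^ h)"
      using power_of_mean_le_mean_of_powers[OF h T, of y] cT by (simp add: y_def N_def)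
    also have "\<dots> \<le> (real g - 1) * real m ^ h"
      using Ch_g_set_sum_window_excess_power_le[OF A C, of m] g by (simp add: y_def T_def)
    finally show ?thesis using le_root_of_mean_power_le[OF h N] g by simp
  next
    case True
    have "0 \<le> (real g - 1) powr (1 / real h) * real m * N powr (1 - 1 / real h)" by simp
    with True show ?thesis by linarith
  qed
  then have "real m * real (card A)
      \<le> real m * ((real g - 1) powr (1 / real h) * N powr (1 - 1 / real h) + N * (real h - 1) / real m)"
    using m by (simp add: R_def distrib_left mult_ac)
  then show ?thesis using m by (simp add: N_def)
qed

lemma powr_add_le_powr_add_mult:
  fixes x u \<theta> :: real
  assumes x: "x \<ge> 1" and u: "u \<ge> 0" and \<theta>: "0 \<le> \<theta>" "\<theta> \<le> 1"
  shows "(x + u) powr \<theta> \<le> x powr \<theta> + u * x powr (\<theta> - 1)"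
proof -
  have "x + u = x * (1 + u / x)" using x by (simp add: field_simps)
  then have "(x + u) powr \<theta> = x powr \<theta> * (1 + u / x) powr \<theta>"
    using x u by (simp add: powr_mult)
  also have "(1 + u / x) powr \<theta> \<le> (1 + u / x) powr 1" using x u \<theta> by (intro powr_mono) auto
  then have "x powr \<theta> * (1 + u / x) powr \<theta> \<le> x powr \<theta> * (1 + u / x)"
    using x u by (intro mult_left_mono) auto
  also have "x powr \<theta> * (1 + u / x) = x powr \<theta> + u * (x powr \<theta> / x)"
    using x by (simp add: field_simps)
  also have "x powr \<theta> / x = x powr (\<theta> - 1)" using x by (simp add: powr_diff)
  finally show ?thesis .
qed

lemma Ch_g_set_card_le:
  fixes g h n :: nat and A :: "int set"
  assumes h: "h \<ge> 2" and gh: "g \<ge> h" and n: "n \<ge> 1" and A: "A \<subseteq> {1..int n}"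
    and C: "Ch_g_set h g A"
  shows "real (card A) \<le> (real g - 1) powr (1 / real h) * real n powr (1 - 1 / real h)
           + ((real g - 1) powr (1 / real h) + 2 * real h) * real n powr (1/2 - 1 / (2 * real h))"
proof -
  define e where "e = (1::real)/2 - 1 / (2 * real h)"
  define \<theta> where "\<theta> = 1 - 1 / real h"
  define G where "G = (real g - 1) powr (1 / real h)"
  define x where "x = real n"
  define s where "s = x powr (1 - e)"
  define m where "m = nat \<lceil>s\<rceil>"
  have x: "x \<ge> 1" using n by (simp add: x_def)
  have e: "0 \<le> e" "e \<le> 1/2" and \<theta>: "0 \<le> \<theta>" "\<theta> \<le> 1"
    using h by (auto simp: e_def \<theta>_def field_simps)
  have xe: "x powr e \<ge> 1" using x e by (intro ge_one_powr_ge_zero) auto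
  have s: "s \<ge> 1" unfolding s_def using x e by (intro ge_one_powr_ge_zero) auto
  have ms: "s \<le> real m" "real m \<le> s + 1" using s by (auto simp: m_def)
  have m: "m \<ge> 1" using ms s by simp
  have window: "real (card A) \<le> G * (x + (real m - 1)) powr \<theta> + (x + real m - 1) * (real h - 1) / real m"
    using Ch_g_set_card_le_window[OF _ _ n m A C] h gh m
    by (simp add: G_def \<theta>_def x_def of_nat_diff add_diff_eq)
  have first: "(x + (real m - 1)) powr \<theta> \<le> x powr \<theta> + x powr e"
  proof -
    have "(x + (real m - 1)) powr \<theta> \<le> x powr \<theta> + (real m - 1) * x powr (\<theta> - 1)"
      using powr_add_le_powr_add_mult[OF x _ \<theta>] m by simp
    also have "(real m - 1) * x powr (\<theta> - 1) \<le> s * x powr (\<theta> - 1)"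
      using ms by (intro mult_right_mono) auto
    also have "s * x powr (\<theta> - 1) = x powr e"
      using powr_add[of x "1 - e" "\<theta> - 1"] by (simp add: s_def e_def \<theta>_def field_simps)
    finally show ?thesis by simp
  qed
  have second: "(x + real m - 1) * (real h - 1) / real m \<le> (x powr e + 1) * (real h - 1)"
  proof -
    have "(x + real m - 1) / real m \<le> x / real m + 1" using m by (simp add: field_simps)
    also have "x / real m \<le> x / s" using ms s x by (intro divide_left_mono) auto
    also have "x / s = x powr e"
      using x powr_diff[of x 1 "1 - e"] by (simp add: s_def)
    finally show ?thesis using h by (simp add: mult_right_mono divide_simps)
  qed
  have "real (card A) \<le> G * (x powr \<theta> + x powr e) + (x powr e + 1) * (real h - 1)"
    using window first second mult_left_mono[OF first, of G] by (simp add: G_def)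
  also have "\<dots> \<le> G * x powr \<theta> + (G + 2 * real h) * x powr e"
    using xe mult_left_mono[OF xe, of "real h"] by (simp add: algebra_simps)
  finally show ?thesis by (simp add: G_def x_def e_def \<theta>_def)
qed

theorem theorem1:
  fixes g h :: nat
  assumes "h \<ge> 2" and "g \<ge> h"
  shows "\<exists>C::real. C > 0 \<and>
    (\<forall>(n::nat) (A::int set). n \<ge> 1 \<longrightarrow> A \<subseteq> {1..int n} \<longrightarrow> Ch_g_set h g A \<longrightarrow>
       real (card A) \<le> (real g - 1) powr (1 / real h) * real n powr (1 - 1 / real h)
                       + C * real n powr (1/2 - 1 / (2 * real h)))"
proof (intro exI conjI allI impI)
  show "0 < (real g - 1) powr (1 / real h) + 2 * real h"
    using assms by (simp add: add_nonneg_pos)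
qed (use Ch_g_set_card_le[OF assms] in blast)

end
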